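(* Let $k\ge 2$. Let $G$ be a finite simple graph admitting a closed neighborhood balanced $k$-coloring $c$ with $|c^{-1}(1)|=\dots=|c^{-1}(k)|$, and let $H$ be a finite simple graph admitting a closed neighborhood balanced $k$-coloring $c'$ with $|c'^{-1}(1)|=\dots=|c'^{-1}(k)|$. Then the join $G\vee H$ admits a closed neighborhood balanced $k$-coloring.
   Context: For a vertex $v$, $N[v]=\{v\}\cup\{u : uv\in E\}$. A closed neighborhood balanced $k$-coloring of a graph is a map $c: V\to\{1,\dots,k\}$ such that for every vertex $v$ the numbers $|\{u\in N[v] : c(u)=i\}|$, $i=1,\dots,k$, are all equal. The join $G\vee H$ of vertex-disjoint graphs has vertex set $V(G)\cup V(H)$ and edge set $E(G)\cup E(H)\cup\{gh: g\in V(G), h\in V(H)\}$. *)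

theory Defs
  imports Main
begin

definition simple_graph :: "'a set \<Rightarrow> 'a set set \<Rightarrow> bool" where
  "simple_graph V E \<longleftrightarrow> finite V \<and> (\<forall>e\<in>E. e \<subseteq> V \<and> card e = 2)"

definition closed_nbhd :: "'a set set \<Rightarrow> 'a \<Rightarrow> 'a set" where
  "closed_nbhd E v = {v} \<union> {u. {u, v} \<in> E}"

definition cnb_coloring :: "'a set \<Rightarrow> 'a set set \<Rightarrow> nat \<Rightarrow> ('a \<Rightarrow> nat) \<Rightarrow> bool" where
  "cnb_coloring V E k c \<longleftrightarrow>
     (\<forall>v\<in>V. c v \<in> {1..k}) \<and>
     (\<forall>v\<in>V. \<forall>i\<in>{1..k}. \<forall>j\<in>{1..k}.
        card {u\<in>closed_nbhd E v. c u = i} = card {u\<in>closed_nbhd E v. c u = j})"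

definition join_vertices :: "'a set \<Rightarrow> 'b set \<Rightarrow> ('a + 'b) set" where
  "join_vertices V1 V2 = Inl ` V1 \<union> Inr ` V2"

definition join_edges :: "'a set \<Rightarrow> 'a set set \<Rightarrow> 'b set \<Rightarrow> 'b set set \<Rightarrow> ('a + 'b) set set" where
  "join_edges V1 E1 V2 E2 =
     (image Inl) ` E1 \<union> (image Inr) ` E2 \<union> {{Inl g, Inr h} | g h. g \<in> V1 \<and> h \<in> V2}"

end

theory Submission
  imports Defs
begin

text \<open>The closed neighbourhood of a vertex of G in the join is the disjoint union of its
  closed neighbourhood in G with all of H, and symmetrically for H. A colouring that is
  balanced on each of two disjoint sets is balanced on their union, so colouring G by c
  and H by c' balances every closed neighbourhood of the join: the hypothesis on G and H
  that all colour classes have the same size says exactly that c is balanced on V(G)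
  and c' on V(H).\<close>

definition balanced_on :: "nat \<Rightarrow> ('a \<Rightarrow> nat) \<Rightarrow> 'a set \<Rightarrow> bool" where
  "balanced_on k c S \<longleftrightarrow>
     (\<forall>i\<in>{1..k}. \<forall>j\<in>{1..k}. card {u\<in>S. c u = i} = card {u\<in>S. c u = j})"

lemma cnb_coloring_iff_balanced_on:
  "cnb_coloring V E k c \<longleftrightarrow>
     (\<forall>v\<in>V. c v \<in> {1..k}) \<and> (\<forall>v\<in>V. balanced_on k c (closed_nbhd E v))"
  unfolding cnb_coloring_def balanced_on_def by blast

lemma card_filter_case_sum_Plus:
  assumes "finite A" "finite B"
  shows "card {x \<in> A <+> B. case_sum c c' x = i} = card {a\<in>A. c a = i} + card {b\<in>B. c' b = i}"
proof -
  have "{x \<in> A <+> B. case_sum c c' x = i} = {a\<in>A. c a = i} <+> {b\<in>B. c' b = i}"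
    by (auto simp: Plus_def)
  then show ?thesis
    using assms by (simp add: card_Plus)
qed

lemma balanced_on_Plus:
  assumes "finite A" "finite B" "balanced_on k c A" "balanced_on k c' B"
  shows "balanced_on k (case_sum c c') (A <+> B)"
  unfolding balanced_on_def
proof (intro ballI)
  fix i j
  assume ij: "i \<in> {1..k}" "j \<in> {1..k}"
  have "card {a\<in>A. c a = i} = card {a\<in>A. c a = j}"
    using assms(3) ij unfolding balanced_on_def by blast
  moreover have "card {b\<in>B. c' b = i} = card {b\<in>B. c' b = j}"
    using assms(4) ij unfolding balanced_on_def by blast
  ultimately show "card {x \<in> A <+> B. case_sum c c' x = i} = card {x \<in> A <+> B. case_sum c c' x = j}"
    unfolding card_filter_case_sum_Plus[OF assms(1,2)] by simp
qed

lemma finite_closed_nbhd: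
  assumes "simple_graph V E" "v \<in> V"
  shows "finite (closed_nbhd E v)"
proof -
  have "closed_nbhd E v \<subseteq> V"
    using assms unfolding closed_nbhd_def simple_graph_def by auto
  then show ?thesis
    using assms(1) finite_subset unfolding simple_graph_def by blast
qed

lemma Inl_doubleton_in_join_edges_iff:
  "{Inl u, Inl v} \<in> join_edges V1 E1 V2 E2 \<longleftrightarrow> {u, v} \<in> E1"
proof -
  have "inj (image Inl)"
    by (simp add: inj_on_def inj_image_eq_iff)
  then have "{Inl u, Inl v} \<in> image Inl ` E1 \<longleftrightarrow> {u, v} \<in> E1"
    using inj_image_mem_iff[of "image Inl" "{u, v}"] by simp
  moreover have "{Inl u, Inl v} \<notin> image Inr ` E2"
    by blast
  moreover have "{Inl u, Inl v} \<noteq> {Inl g, Inr h}" for g h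
    by (auto simp: doubleton_eq_iff)
  ultimately show ?thesis
    unfolding join_edges_def by blast
qed

lemma Inr_doubleton_in_join_edges_iff:
  "{Inr u, Inr v} \<in> join_edges V1 E1 V2 E2 \<longleftrightarrow> {u, v} \<in> E2"
proof -
  have "inj (image Inr)"
    by (simp add: inj_on_def inj_image_eq_iff)
  then have "{Inr u, Inr v} \<in> image Inr ` E2 \<longleftrightarrow> {u, v} \<in> E2"
    using inj_image_mem_iff[of "image Inr" "{u, v}"] by simp
  moreover have "{Inr u, Inr v} \<notin> image Inl ` E1"
    by blast
  moreover have "{Inr u, Inr v} \<noteq> {Inl g, Inr h}" for g h
    by (auto simp: doubleton_eq_iff)
  ultimately show ?thesis
    unfolding join_edges_def by blast
qed

lemma mixed_doubleton_in_join_edges_iff: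
  "{Inl g, Inr h} \<in> join_edges V1 E1 V2 E2 \<longleftrightarrow> g \<in> V1 \<and> h \<in> V2"
proof -
  have "{Inl g, Inr h} \<notin> image Inl ` E1" "{Inl g, Inr h} \<notin> image Inr ` E2"
    by blast+
  moreover have "{Inl g, Inr h} \<in> {{Inl g', Inr h'} | g' h'. g' \<in> V1 \<and> h' \<in> V2}
      \<longleftrightarrow> g \<in> V1 \<and> h \<in> V2"
    by (auto simp: doubleton_eq_iff)
  ultimately show ?thesis
    unfolding join_edges_def by blast
qed

lemma closed_nbhd_join_Inl:
  assumes "v \<in> V1"
  shows "closed_nbhd (join_edges V1 E1 V2 E2) (Inl v) = closed_nbhd E1 v <+> V2"
proof (rule set_eqI)
  fix x
  show "x \<in> closed_nbhd (join_edges V1 E1 V2 E2) (Inl v) \<longleftrightarrow> x \<in> closed_nbhd E1 v <+> V2"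
    using assms
    by (cases x) (auto simp: closed_nbhd_def Plus_def insert_commute
        Inl_doubleton_in_join_edges_iff mixed_doubleton_in_join_edges_iff)
qed

lemma closed_nbhd_join_Inr:
  assumes "v \<in> V2"
  shows "closed_nbhd (join_edges V1 E1 V2 E2) (Inr v) = V1 <+> closed_nbhd E2 v"
proof (rule set_eqI)
  fix x
  show "x \<in> closed_nbhd (join_edges V1 E1 V2 E2) (Inr v) \<longleftrightarrow> x \<in> V1 <+> closed_nbhd E2 v"
    using assms
    by (cases x) (auto simp: closed_nbhd_def Plus_def
        Inr_doubleton_in_join_edges_iff mixed_doubleton_in_join_edges_iff)
qed

lemma cnb_coloring_join:
  assumes G: "simple_graph V1 E1" "cnb_coloring V1 E1 k c" "balanced_on k c V1"
    and H: "simple_graph V2 E2" "cnb_coloring V2 E2 k c'" "balanced_on k c' V2"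
  shows "cnb_coloring (join_vertices V1 V2) (join_edges V1 E1 V2 E2) k (case_sum c c')"
proof -
  have c: "\<forall>v\<in>V1. c v \<in> {1..k}" "\<forall>v\<in>V1. balanced_on k c (closed_nbhd E1 v)"
    and c': "\<forall>v\<in>V2. c' v \<in> {1..k}" "\<forall>v\<in>V2. balanced_on k c' (closed_nbhd E2 v)"
    using G(2) H(2) unfolding cnb_coloring_iff_balanced_on by blast+
  have "finite V1" "finite V2"
    using G(1) H(1) unfolding simple_graph_def by blast+
  then have "balanced_on k (case_sum c c') (closed_nbhd (join_edges V1 E1 V2 E2) x)"
    if "x \<in> V1 <+> V2" for x
    using that c(2) c'(2) finite_closed_nbhd[OF G(1)] finite_closed_nbhd[OF H(1)] G(3) H(3)
    by (auto simp: closed_nbhd_join_Inl closed_nbhd_join_Inr balanced_on_Plus)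
  moreover have "case_sum c c' x \<in> {1..k}" if "x \<in> V1 <+> V2" for x
    using that c(1) c'(1) by auto
  ultimately show ?thesis
    unfolding cnb_coloring_iff_balanced_on join_vertices_def Plus_def[symmetric] by blast
qed

theorem theorem2p22:
  fixes V1 :: "'a set" and E1 :: "'a set set" and V2 :: "'b set" and E2 :: "'b set set"
    and k :: nat and c :: "'a \<Rightarrow> nat" and c' :: "'b \<Rightarrow> nat"
  assumes "k \<ge> 2"
    and "simple_graph V1 E1" and "simple_graph V2 E2"
    and "cnb_coloring V1 E1 k c"
    and "\<forall>i\<in>{1..k}. \<forall>j\<in>{1..k}. card {v\<in>V1. c v = i} = card {v\<in>V1. c v = j}"
    and "cnb_coloring V2 E2 k c'"
    and "\<forall>i\<in>{1..k}. \<forall>j\<in>{1..k}. card {v\<in>V2. c' v = i} = card {v\<in>V2. c' v = j}"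
  shows "\<exists>d. cnb_coloring (join_vertices V1 V2) (join_edges V1 E1 V2 E2) k d"
proof
  have "balanced_on k c V1" "balanced_on k c' V2"
    using assms(5,7) unfolding balanced_on_def by blast+
  then show "cnb_coloring (join_vertices V1 V2) (join_edges V1 E1 V2 E2) k (case_sum c c')"
    using cnb_coloring_join[OF assms(2,4) _ assms(3,6)] by blast
qed

end
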